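(* There exists an MDP $M$ and a policy class $\Pi\subset\Pi_{\mathrm{RNS}}$ with horizon $H=1$ such that $C^M_{\infty;h}\le 2$ (and hence $\mathsf{Cov}^M_{h,\varepsilon}\le2$ as well), yet for all $\varepsilon>0$, $$\inf_{p\in\Delta(\Pi)}\Psi^M_{\infty;h,\varepsilon}(p)\ge\frac{1}{\varepsilon},$$ and in particular $\inf_{p\in\Delta(\Pi)}\Psi^M_{\infty;h,0}(p)=\infty$.
   Context: Episodic reward-free MDP (countable states $\mathcal{X}$, actions $\mathcal{A}$, horizon $H$); $\Pi_{\mathrm{RNS}}$ randomized non-stationary policies; $d^{M,\pi}_h(x,a)$ layer-$h$ occupancy, $d^{M,p}_h=\mathbb{E}_{\pi\sim p}d^{M,\pi}_h$. Definitions: $C^M_{\infty;h}=\inf_{\mu\in\Delta(\mathcal{X}\times\mathcal{A})}\sup_{\pi\in\Pi}\sup_{(x,a)}\frac{d^{M,\pi}_h(x,a)}{\mu(x,a)}$; $\mathsf{Cov}^M_{h,\varepsilon}=\inf_{p\in\Delta(\Pi)}\sup_{\pi\in\Pi}\mathbb{E}^{M,\pi}\big[\frac{d^{M,\pi}_h(x_h,a_h)}{d^{M,p}_h(x_h,a_h)+\varepsilon d^{M,\pi}_h(x_h,a_h)}\big]$; admissible $L_\infty$-coverage $\Psi^M_{\infty;h,\varepsilon}(p)=\sup_{\pi\in\Pi}\sup_{(x,a)}\frac{d^{M,\pi}_h(x,a)}{d^{M,p}_h(x,a)+\varepsilon d^{M,\pi}_h(x,a)}$. *)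

theory Defs
  imports "HOL-Probability.Probability"
begin

text \<open>Layers are numbered 1..H.  init is the layer-1 state distribution, and
  trans h x a is the distribution of x_(h+1) given (x_h, a_h) = (x, a).\<close>

record ('x, 'a) mdp =
  horizon :: nat
  init :: "'x pmf"
  trans :: "nat \<Rightarrow> 'x \<Rightarrow> 'a \<Rightarrow> 'x pmf"

type_synonym ('x, 'a) policy = "nat \<Rightarrow> 'x \<Rightarrow> 'a pmf"

definition Pi_RNS :: "('x, 'a) policy set" where
  "Pi_RNS = UNIV"

text \<open>State distribution at layer (k+1).\<close>

primrec state_dist :: "('x, 'a) mdp \<Rightarrow> ('x, 'a) policy \<Rightarrow> nat \<Rightarrow> 'x pmf" where
  "state_dist M pol 0 = init M"
| "state_dist M pol (Suc k) =
     bind_pmf (state_dist M pol k)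
       (\<lambda>x. bind_pmf (pol (Suc k) x) (\<lambda>a. trans M (Suc k) x a))"

definition occ_pmf :: "('x, 'a) mdp \<Rightarrow> ('x, 'a) policy \<Rightarrow> nat \<Rightarrow> ('x \<times> 'a) pmf" where
  "occ_pmf M pol h =
     bind_pmf (state_dist M pol (h - 1)) (\<lambda>x. map_pmf (\<lambda>a. (x, a)) (pol h x))"

definition occ :: "('x, 'a) mdp \<Rightarrow> ('x, 'a) policy \<Rightarrow> nat \<Rightarrow> 'x \<times> 'a \<Rightarrow> real" where
  "occ M pol h z = pmf (occ_pmf M pol h) z"

definition occ_mix :: "('x, 'a) mdp \<Rightarrow> ('x, 'a) policy pmf \<Rightarrow> nat \<Rightarrow> 'x \<times> 'a \<Rightarrow> real" where
  "occ_mix M p h z = measure_pmf.expectation p (\<lambda>pol. occ M pol h z)"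

text \<open>Ratios are taken in ennreal: 0/0 = 0 and a/0 = \<infinity> for a > 0.\<close>

definition Cinf :: "('x, 'a) mdp \<Rightarrow> ('x, 'a) policy set \<Rightarrow> nat \<Rightarrow> ennreal" where
  "Cinf M PC h =
     (INF mu \<in> (UNIV :: ('x \<times> 'a) pmf set).
        SUP pol \<in> PC. SUP z \<in> UNIV. ennreal (occ M pol h z) / ennreal (pmf mu z))"

definition Cov :: "('x, 'a) mdp \<Rightarrow> ('x, 'a) policy set \<Rightarrow> nat \<Rightarrow> real \<Rightarrow> ennreal" where
  "Cov M PC h \<epsilon> =
     (INF p \<in> {p :: ('x, 'a) policy pmf. set_pmf p \<subseteq> PC}.
        SUP pol \<in> PC.
          \<integral>\<^sup>+ z. ennreal (occ M pol h z) / ennreal (occ_mix M p h z + \<epsilon> * occ M pol h z)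
            \<partial>(measure_pmf (occ_pmf M pol h)))"

definition Psi_inf :: "('x, 'a) mdp \<Rightarrow> ('x, 'a) policy set \<Rightarrow> nat \<Rightarrow> real
    \<Rightarrow> ('x, 'a) policy pmf \<Rightarrow> ennreal" where
  "Psi_inf M PC h \<epsilon> p =
     (SUP pol \<in> PC. SUP z \<in> UNIV.
        ennreal (occ M pol h z) / ennreal (occ_mix M p h z + \<epsilon> * occ M pol h z))"

end

theory Submission
  imports Defs
begin

text \<open>Take one state and actions \<open>\<nat>\<close>, and let policy \<open>n\<close> play the rare action \<open>n + 1\<close>
  with probability \<open>w n = 4^-(n+1)\<close> and action \<open>0\<close> otherwise. As \<open>w n\<close> is the square of
  the geometric weight \<open>2^-(n+1)\<close>, the distribution \<open>\<mu>(0, a) = 2^-(a+1)\<close> dominates every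
  occupancy up to the factor 2, and under the geometric mixture of the policies the expected
  coverage ratio of policy \<open>n\<close> is at most \<open>4/3 + w n 2^(n+1) \<le> 2\<close>. But every mixture \<open>p\<close>
  gives some policy \<open>n\<close> an arbitrarily small weight \<open>p n\<close>, and at its rare action the
  \<open>L\<^sub>\<infinity>\<close> ratio is \<open>w n / (w n p n + \<epsilon> w n) = 1 / (p n + \<epsilon>)\<close>.\<close>

lemma ennreal_le_if_reals_below:
  assumes "\<And>r::real. 0 \<le> r \<Longrightarrow> ennreal r < x \<Longrightarrow> ennreal r < y"
  shows "x \<le> (y::ennreal)"
proof (rule dense_le)
  fix z assume z: "z < x"
  then obtain r where "0 \<le> r" "z = ennreal r" by (cases z) auto
  then show "z \<le> y" using assms z by (simp add: less_imp_le)
qed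

lemma ennreal_divide_le_ennreal:
  "0 \<le> x \<Longrightarrow> 0 < y \<Longrightarrow> x \<le> c * y \<Longrightarrow> ennreal x / ennreal y \<le> ennreal c"
  by (simp add: divide_ennreal ennreal_leI pos_divide_le_eq)

lemma pmf_map_bernoulli_if:
  assumes "0 \<le> w" "w \<le> 1" "t \<noteq> f"
  shows "pmf (map_pmf (\<lambda>b. if b then t else f) (bernoulli_pmf w)) a =
    (if a = t then w else if a = f then 1 - w else 0)"
proof -
  have "(\<lambda>b. if b then t else f) -` {a} = (if a = t then {True} else if a = f then {False} else {})"
    using assms(3) by (auto split: if_splits)
  then show ?thesis using assms(1,2) by (simp add: pmf_map measure_pmf_single)
qed

lemma exists_pmf_inj_image_less:
  fixes f :: "nat \<Rightarrow> 'a"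
  assumes "inj f" "0 < \<delta>"
  shows "\<exists>m. pmf p (f m) < \<delta>"
proof (rule ccontr)
  assume "\<nexists>m. pmf p (f m) < \<delta>"
  then have large: "\<delta> \<le> pmf p (f m)" for m by (simp add: not_less)
  obtain N :: nat where N: "1 / \<delta> < real N" using reals_Archimedean2 by blast
  have "real N * \<delta> = (\<Sum>m<N. \<delta>)" by simp
  also have "\<dots> \<le> (\<Sum>m<N. pmf p (f m))" by (intro sum_mono large)
  also have "\<dots> = measure p (f ` {..<N})"
    using assms(1) by (simp add: measure_measure_pmf_finite sum.reindex inj_on_subset)
  also have "\<dots> \<le> 1" by simp
  finally show False using N assms(2) by (simp add: divide_less_eq)
qed

lemma pmf_map_Pair: "pmf (map_pmf (Pair x0) A) (x, a) = (if x = x0 then pmf A a else 0)"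
  by (auto simp: pmf_map_inj' inj_def pmf_eq_0_set_pmf)

lemma occ_layer1_return_init:
  assumes "init M = return_pmf x0"
  shows "occ M pol 1 (x, a) = (if x = x0 then pmf (pol 1 x0) a else 0)"
proof -
  have "occ_pmf M pol 1 = map_pmf (Pair x0) (pol 1 x0)"
    by (simp add: occ_pmf_def assms bind_return_pmf)
  then show ?thesis by (simp add: occ_def pmf_map_Pair)
qed

lemma Cinf_le_if_dominated:
  assumes "0 \<le> C" and dom: "\<And>pol z. pol \<in> PC \<Longrightarrow> occ M pol h z \<le> C * pmf mu z"
  shows "Cinf M PC h \<le> ennreal C"
proof -
  have "ennreal (occ M pol h z) / ennreal (pmf mu z) \<le> ennreal C" if "pol \<in> PC" for pol z
  proof (cases "occ M pol h z = 0")
    case False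
    then have "0 < C * pmf mu z"
      using dom[OF that, of z] False pmf_nonneg[of "occ_pmf M pol h" z]
      unfolding occ_def by linarith
    then have "0 < pmf mu z"
      using \<open>0 \<le> C\<close> by (simp add: zero_less_mult_iff)
    then show ?thesis
      using dom[OF that] by (intro ennreal_divide_le_ennreal) (auto simp: occ_def)
  qed simp
  then show ?thesis
    unfolding Cinf_def by (intro INF_lower2[of mu] SUP_least) auto
qed

lemma Cov_integrand_le:
  assumes "0 \<le> \<epsilon>" "0 \<le> d" "0 < d\<^sub>p"
  shows "ennreal d / ennreal (d\<^sub>p + \<epsilon> * d) \<le> ennreal (d / d\<^sub>p)"
proof (cases "d = 0")
  case False
  have "d \<le> d / d\<^sub>p * d\<^sub>p + d / d\<^sub>p * (\<epsilon> * d)"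
    using assms by simp
  then show ?thesis
    using assms False by (intro ennreal_divide_le_ennreal add_pos_nonneg) (auto simp: distrib_left)
qed simp

lemma Cov_le_if_mixture_bound:
  assumes "set_pmf p \<subseteq> PC" "0 \<le> \<epsilon>"
    and pos: "\<And>pol z. pol \<in> PC \<Longrightarrow> z \<in> set_pmf (occ_pmf M pol h) \<Longrightarrow> 0 < occ_mix M p h z"
    and bound: "\<And>pol. pol \<in> PC \<Longrightarrow>
      (\<integral>\<^sup>+ z. ennreal (occ M pol h z / occ_mix M p h z) \<partial>measure_pmf (occ_pmf M pol h)) \<le> C"
  shows "Cov M PC h \<epsilon> \<le> C"
proof -
  have "(\<integral>\<^sup>+ z. ennreal (occ M pol h z) / ennreal (occ_mix M p h z + \<epsilon> * occ M pol h z)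
          \<partial>measure_pmf (occ_pmf M pol h)) \<le> C" if "pol \<in> PC" for pol
  proof -
    have "AE z in measure_pmf (occ_pmf M pol h).
        ennreal (occ M pol h z) / ennreal (occ_mix M p h z + \<epsilon> * occ M pol h z)
        \<le> ennreal (occ M pol h z / occ_mix M p h z)"
      using pos[OF that] \<open>0 \<le> \<epsilon>\<close> by (intro AE_pmfI Cov_integrand_le) (auto simp: occ_def)
    then show ?thesis
      by (rule order_trans[OF nn_integral_mono_AE bound[OF that]])
  qed
  then show ?thesis
    unfolding Cov_def using assms(1) by (intro INF_lower2[of p] SUP_least) auto
qed

lemma occ_mix_nonneg: "0 \<le> occ_mix M p h z"
  unfolding occ_mix_def occ_def by (rule integral_nonneg_AE) simp

lemma ennreal_less_coverage_ratio:
  assumes "0 \<le> r" "0 \<le> \<epsilon>" "0 < d" "0 \<le> d\<^sub>p" "d\<^sub>p \<le> \<delta> * d" "r * (\<delta> + \<epsilon>) < 1"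
  shows "ennreal r < ennreal d / ennreal (d\<^sub>p + \<epsilon> * d)"
proof (cases "d\<^sub>p + \<epsilon> * d = 0")
  case False
  have "r * (d\<^sub>p + \<epsilon> * d) \<le> r * (\<delta> + \<epsilon>) * d"
    using mult_left_mono[OF assms(5,1)] by (simp add: algebra_simps)
  also have "\<dots> < d" using assms(3,6) by simp
  finally have "r * (d\<^sub>p + \<epsilon> * d) < d" .
  moreover have "0 < d\<^sub>p + \<epsilon> * d"
    using False assms(2-4) by (simp add: order_less_le add_nonneg_nonneg)
  ultimately show ?thesis
    using assms(1,3) by (simp add: divide_ennreal ennreal_less_iff less_divide_eq mult.commute)
qed (use assms(3) in simp)

text \<open>As \<open>1 / 0 = \<infinity>\<close> in \<^typ>\<open>ennreal\<close>, for \<open>\<epsilon> = 0\<close> this says that \<^const>\<open>Psi_inf\<close> is infinite.\<close>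

lemma Psi_inf_ge_inverse:
  assumes "0 \<le> \<epsilon>"
    and undercovered: "\<And>\<delta>. 0 < \<delta> \<Longrightarrow>
      \<exists>pol\<in>PC. \<exists>z. 0 < occ M pol h z \<and> occ_mix M p h z \<le> \<delta> * occ M pol h z"
  shows "1 / ennreal \<epsilon> \<le> Psi_inf M PC h \<epsilon> p"
proof (rule ennreal_le_if_reals_below)
  fix r :: real assume r: "0 \<le> r" "ennreal r < 1 / ennreal \<epsilon>"
  have "r * \<epsilon> < 1"
  proof (cases "\<epsilon> = 0")
    case False
    then show ?thesis
      using r assms(1) by (simp add: divide_ennreal ennreal_less_iff flip: ennreal_1)
         (simp add: less_divide_eq)
  qed simp
  define \<delta> where "\<delta> = (1 - r * \<epsilon>) / (r + 1)"
  have "0 < \<delta>" using \<open>r * \<epsilon> < 1\<close> r(1) by (simp add: \<delta>_def)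
  then obtain pol z where pol: "pol \<in> PC" and d: "0 < occ M pol h z"
    and dp: "occ_mix M p h z \<le> \<delta> * occ M pol h z"
    using undercovered by blast
  have "r * (\<delta> + \<epsilon>) < 1"
    using \<open>0 < \<delta>\<close> r(1) by (simp add: \<delta>_def field_simps)
  have "ennreal r < ennreal (occ M pol h z) / ennreal (occ_mix M p h z + \<epsilon> * occ M pol h z)"
    using r(1) assms(1) d occ_mix_nonneg dp \<open>r * (\<delta> + \<epsilon>) < 1\<close>
    by (rule ennreal_less_coverage_ratio)
  also have "\<dots> \<le> Psi_inf M PC h \<epsilon> p"
    unfolding Psi_inf_def using pol by (intro SUP_upper2[of pol] SUP_upper2[of z]) auto
  finally show "ennreal r < Psi_inf M PC h \<epsilon> p" .
qed

definition rare_prob :: "nat \<Rightarrow> real" where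
  "rare_prob n = ((1/2) ^ Suc n)\<^sup>2"

definition rare_action_policy :: "nat \<Rightarrow> (nat, nat) policy" where
  "rare_action_policy n =
     (\<lambda>_ _. map_pmf (\<lambda>b. if b then Suc n else 0) (bernoulli_pmf (rare_prob n)))"

definition one_state_mdp :: "(nat, nat) mdp" where
  "one_state_mdp = \<lparr>horizon = 1, init = return_pmf 0, trans = (\<lambda>_ _ _. return_pmf 0)\<rparr>"

lemma half_power_Suc_le: "(1/2::real) ^ Suc n \<le> 1/2"
  using power_le_one[of "1/2::real" n] by simp

lemma rare_prob_pos: "0 < rare_prob n"
  by (simp add: rare_prob_def)

lemma rare_prob_le: "rare_prob n \<le> 1/4"
proof -
  have "((1/2::real) ^ Suc n)\<^sup>2 \<le> (1/2)\<^sup>2"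
    by (rule power_mono[OF half_power_Suc_le]) simp
  also have "\<dots> = 1/4" by (simp add: power2_eq_square)
  finally show ?thesis by (simp only: rare_prob_def)
qed

lemma rare_prob_le_sqrt: "rare_prob n \<le> (1/2) ^ Suc n"
  unfolding rare_prob_def power2_eq_square
  using half_power_Suc_le[of n] by (intro mult_left_le_one_le) auto

text \<open>Rewrite with the following lemma by \<open>unfolding\<close> before simplifying: the simplifier
  turns the layer index \<open>1\<close> into \<open>Suc 0\<close>, after which the lemma no longer matches.\<close>

lemma occ_rare_action_policy:
  "occ one_state_mdp (rare_action_policy n) 1 (x, a) =
     (if x = 0 \<and> a = Suc n then rare_prob n else if x = 0 \<and> a = 0 then 1 - rare_prob n else 0)"
proof -
  have init: "init one_state_mdp = return_pmf 0" by (simp add: one_state_mdp_def)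
  show ?thesis
    unfolding occ_layer1_return_init[OF init] using rare_prob_pos[of n] rare_prob_le[of n]
    by (simp add: rare_action_policy_def pmf_map_bernoulli_if)
qed

lemma inj_rare_action_policy: "inj rare_action_policy"
proof
  fix m n assume eq: "rare_action_policy m = rare_action_policy n"
  have "rare_prob n = occ one_state_mdp (rare_action_policy n) 1 (0, Suc n)"
    unfolding occ_rare_action_policy by simp
  also have "\<dots> = occ one_state_mdp (rare_action_policy m) 1 (0, Suc n)"
    by (simp only: eq)
  also have "\<dots> = (if m = n then rare_prob n else 0)"
    unfolding occ_rare_action_policy by simp
  finally show "m = n"
    using rare_prob_pos[of n] by (auto split: if_splits)
qed

lemma occ_mix_rare_action:
  assumes "set_pmf p \<subseteq> range rare_action_policy"
  shows "occ_mix one_state_mdp p 1 (0, Suc m) = rare_prob m * pmf p (rare_action_policy m)"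
proof -
  have "occ_mix one_state_mdp p 1 (0, Suc m) =
      measure_pmf.expectation p (\<lambda>pol. rare_prob m * indicator {rare_action_policy m} pol)"
    unfolding occ_mix_def
  proof (intro integral_cong_AE AE_pmfI)
    fix pol assume "pol \<in> set_pmf p"
    then obtain n where pol: "pol = rare_action_policy n" using assms by auto
    show "occ one_state_mdp pol 1 (0, Suc m) = rare_prob m * indicator {rare_action_policy m} pol"
      using inj_rare_action_policy unfolding pol occ_rare_action_policy by (auto simp: inj_eq)
  qed auto
  then show ?thesis by (simp add: measure_pmf_single)
qed

lemma occ_mix_common_action:
  assumes "set_pmf p \<subseteq> range rare_action_policy"
  shows "3/4 \<le> occ_mix one_state_mdp p 1 (0, 0)"
  unfolding occ_mix_def
proof (rule measure_pmf.integral_ge_const)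
  show "integrable p (\<lambda>pol. occ one_state_mdp pol 1 (0, 0))"
    by (rule measure_pmf.integrable_const_bound[where B=1]) (auto simp: occ_def pmf_le_1)
  show "AE pol in p. 3/4 \<le> occ one_state_mdp pol 1 (0, 0)"
  proof (rule AE_pmfI)
    fix pol assume "pol \<in> set_pmf p"
    then obtain n where pol: "pol = rare_action_policy n" using assms by auto
    show "3/4 \<le> occ one_state_mdp pol 1 (0, 0)"
      using rare_prob_le[of n] unfolding pol occ_rare_action_policy by simp
  qed
qed

lemma Cinf_rare_action_le_2: "Cinf one_state_mdp (range rare_action_policy) 1 \<le> 2"
proof -
  define mu where "mu = map_pmf (Pair (0::nat)) (geometric_pmf (1/2))"
  have dominated: "occ one_state_mdp pol 1 z \<le> 2 * pmf mu z" if "pol \<in> range rare_action_policy" for pol z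
  proof -
    from that obtain n where pol: "pol = rare_action_policy n" by auto
    obtain x a where z: "z = (x, a)" by fastforce
    show ?thesis
      unfolding pol z occ_rare_action_policy mu_def pmf_map_Pair
      using rare_prob_le_sqrt[of n] rare_prob_pos[of n] by auto
  qed
  have "Cinf one_state_mdp (range rare_action_policy) 1 \<le> ennreal 2"
    by (rule Cinf_le_if_dominated) (use dominated in auto)
  then show ?thesis by simp
qed

lemma coverage_integral_rare_action_policy:
  assumes p_range: "set_pmf p \<subseteq> range rare_action_policy"
    and "0 < pmf p (rare_action_policy n)"
  shows "(\<integral>\<^sup>+ z. ennreal (occ one_state_mdp (rare_action_policy n) 1 z / occ_mix one_state_mdp p 1 z)
            \<partial>measure_pmf (occ_pmf one_state_mdp (rare_action_policy n) 1)) =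
         ennreal ((1 - rare_prob n)\<^sup>2 / occ_mix one_state_mdp p 1 (0, 0)
                  + rare_prob n / pmf p (rare_action_policy n))"
    (is "?I = _")
proof -
  define w where "w = rare_prob n"
  define D where "D = occ_mix one_state_mdp p 1 (0, 0)"
  define q where "q = pmf p (rare_action_policy n)"
  have "0 < w" "w \<le> 1/4" "0 < q"
    using rare_prob_pos[of n] rare_prob_le[of n] assms(2) by (simp_all add: w_def q_def)
  have "3/4 \<le> D" unfolding D_def by (rule occ_mix_common_action[OF p_range])
  have occ_pol: "occ one_state_mdp (rare_action_policy n) 1 (x, a) =
      (if x = 0 \<and> a = Suc n then w else if x = 0 \<and> a = 0 then 1 - w else 0)" for x a
    unfolding w_def by (rule occ_rare_action_policy)
  have mix_rare: "occ_mix one_state_mdp p 1 (0, Suc n) = w * q"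
    unfolding occ_mix_rare_action[OF p_range] w_def q_def ..
  let ?S = "{(0, 0), (0, Suc n)}"
  let ?f = "\<lambda>z. ennreal (occ one_state_mdp (rare_action_policy n) 1 z / occ_mix one_state_mdp p 1 z)"
  have occ_outside: "occ one_state_mdp (rare_action_policy n) 1 z = 0" if "z \<notin> ?S" for z
    using that occ_pol[of "fst z" "snd z"] by (cases z) auto
  have "?I = (\<Sum>z\<in>?S. ?f z * ennreal (pmf (occ_pmf one_state_mdp (rare_action_policy n) 1) z))"
  proof (rule nn_integral_measure_pmf_support)
    show "?f z = 0" if "z \<notin> ?S" for z
      unfolding occ_outside[OF that] by simp
  qed auto
  also have "\<dots> = ?f (0, 0) * ennreal (occ one_state_mdp (rare_action_policy n) 1 (0, 0)) +
      ?f (0, Suc n) * ennreal (occ one_state_mdp (rare_action_policy n) 1 (0, Suc n))"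
    by (simp add: occ_def)
  also have "\<dots> = ennreal ((1 - w) / D) * ennreal (1 - w) + ennreal (w / (w * q)) * ennreal w"
    unfolding occ_pol mix_rare D_def[symmetric] by simp
  also have "\<dots> = ennreal ((1 - w) / D * (1 - w)) + ennreal (w / (w * q) * w)"
    using \<open>0 < w\<close> \<open>w \<le> 1/4\<close> \<open>3/4 \<le> D\<close> \<open>0 < q\<close>
    by (subst (1 2) ennreal_mult) auto
  also have "\<dots> = ennreal ((1 - w)\<^sup>2 / D + w / q)"
    using \<open>0 < w\<close> \<open>w \<le> 1/4\<close> \<open>3/4 \<le> D\<close> \<open>0 < q\<close>
    by (subst ennreal_plus[symmetric]) (auto simp: power2_eq_square)
  finally show ?thesis unfolding w_def D_def q_def .
qed

lemma Cov_rare_action_le_2: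
  assumes "0 \<le> \<epsilon>"
  shows "Cov one_state_mdp (range rare_action_policy) 1 \<epsilon> \<le> 2"
proof -
  define p where "p = map_pmf rare_action_policy (geometric_pmf (1/2))"
  have p_range: "set_pmf p \<subseteq> range rare_action_policy" by (auto simp: p_def)
  have pmf_p: "pmf p (rare_action_policy n) = (1/2) ^ Suc n" for n
    unfolding p_def pmf_map_inj'[OF inj_rare_action_policy] by simp
  show ?thesis
  proof (rule Cov_le_if_mixture_bound[OF p_range assms])
    fix pol z
    assume "pol \<in> range rare_action_policy" and z_supp: "z \<in> set_pmf (occ_pmf one_state_mdp pol 1)"
    then obtain n where pol: "pol = rare_action_policy n" by auto
    obtain x a where z: "z = (x, a)" by fastforce
    have "0 < occ one_state_mdp pol 1 z"
      using z_supp by (simp add: occ_def pmf_positive)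
    then have "z = (0, 0) \<or> z = (0, Suc n)"
      unfolding pol z occ_rare_action_policy by (auto split: if_splits)
    then show "0 < occ_mix one_state_mdp p 1 z"
    proof
      assume "z = (0, 0)"
      then show ?thesis using occ_mix_common_action[OF p_range] by simp
    next
      assume "z = (0, Suc n)"
      show ?thesis
        unfolding \<open>z = (0, Suc n)\<close> occ_mix_rare_action[OF p_range] pmf_p
        using rare_prob_pos[of n] by simp
    qed
  next
    fix pol assume "pol \<in> range rare_action_policy"
    then obtain n where pol: "pol = rare_action_policy n" by auto
    have "(1 - rare_prob n)\<^sup>2 \<le> 1"
      using rare_prob_pos[of n] rare_prob_le[of n] by (intro power_le_one) auto
    then have "(1 - rare_prob n)\<^sup>2 / occ_mix one_state_mdp p 1 (0, 0) \<le> 4/3"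
      using occ_mix_common_action[OF p_range] by (simp add: divide_le_eq)
    moreover have "rare_prob n / pmf p (rare_action_policy n) \<le> 1/2"
      unfolding pmf_p rare_prob_def power2_eq_square using half_power_Suc_le[of n] by simp
    ultimately have "ennreal ((1 - rare_prob n)\<^sup>2 / occ_mix one_state_mdp p 1 (0, 0)
        + rare_prob n / pmf p (rare_action_policy n)) \<le> ennreal 2"
      by (intro ennreal_leI) simp
    moreover have "0 < pmf p (rare_action_policy n)" unfolding pmf_p by simp
    ultimately show "(\<integral>\<^sup>+ z. ennreal (occ one_state_mdp pol 1 z / occ_mix one_state_mdp p 1 z)
        \<partial>measure_pmf (occ_pmf one_state_mdp pol 1)) \<le> 2"
      unfolding pol using coverage_integral_rare_action_policy[OF p_range] by simp
  qed
qed

lemma rare_action_mixture_undercovers: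
  assumes "set_pmf p \<subseteq> range rare_action_policy" "0 < \<delta>"
  shows "\<exists>pol\<in>range rare_action_policy. \<exists>z. 0 < occ one_state_mdp pol 1 z \<and>
           occ_mix one_state_mdp p 1 z \<le> \<delta> * occ one_state_mdp pol 1 z"
proof -
  obtain m where small: "pmf p (rare_action_policy m) < \<delta>"
    using exists_pmf_inj_image_less[OF inj_rare_action_policy assms(2)] by blast
  have "0 < occ one_state_mdp (rare_action_policy m) 1 (0, Suc m) \<and>
      occ_mix one_state_mdp p 1 (0, Suc m) \<le> \<delta> * occ one_state_mdp (rare_action_policy m) 1 (0, Suc m)"
    unfolding occ_rare_action_policy occ_mix_rare_action[OF assms(1)]
    using small rare_prob_pos[of m] by simp
  then show ?thesis by blast
qed

theorem proposition7p3:
  shows "\<exists>(M :: (nat, nat) mdp) (PC :: (nat, nat) policy set).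
     horizon M = 1 \<and> PC \<noteq> {} \<and> PC \<subseteq> Pi_RNS \<and>
     Cinf M PC 1 \<le> 2 \<and>
     (\<forall>\<epsilon>>0. Cov M PC 1 \<epsilon> \<le> 2) \<and>
     (\<forall>\<epsilon>>0. (INF p \<in> {p. set_pmf p \<subseteq> PC}. Psi_inf M PC 1 \<epsilon> p) \<ge> ennreal (1 / \<epsilon>)) \<and>
     (INF p \<in> {p. set_pmf p \<subseteq> PC}. Psi_inf M PC 1 0 p) = \<infinity>"
proof (intro exI conjI allI impI)
  let ?PC = "range rare_action_policy"
  have Psi: "1 / ennreal \<epsilon> \<le> (INF p \<in> {p. set_pmf p \<subseteq> ?PC}. Psi_inf one_state_mdp ?PC 1 \<epsilon> p)"
    if "0 \<le> \<epsilon>" for \<epsilon>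
    using that by (intro INF_greatest Psi_inf_ge_inverse rare_action_mixture_undercovers) auto
  show "horizon one_state_mdp = 1" by (simp add: one_state_mdp_def)
  show "?PC \<noteq> {}" by simp
  show "?PC \<subseteq> Pi_RNS" by (simp add: Pi_RNS_def)
  show "Cinf one_state_mdp ?PC 1 \<le> 2" by (rule Cinf_rare_action_le_2)
  show "Cov one_state_mdp ?PC 1 \<epsilon> \<le> 2" if "\<epsilon> > 0" for \<epsilon>
    using that by (intro Cov_rare_action_le_2) simp
  show "ennreal (1 / \<epsilon>) \<le> (INF p \<in> {p. set_pmf p \<subseteq> ?PC}. Psi_inf one_state_mdp ?PC 1 \<epsilon> p)"
    if "\<epsilon> > 0" for \<epsilon>
    using Psi[of \<epsilon>] that divide_ennreal[of 1 \<epsilon>] by simp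
  show "(INF p \<in> {p. set_pmf p \<subseteq> ?PC}. Psi_inf one_state_mdp ?PC 1 0 p) = \<infinity>"
    using Psi[of 0] by (simp add: top_unique)
qed

end
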